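(* Let $\mathcal{E}$ be a finite nonempty set (of domains), let $h\ge 1$, let $\theta^{*}\in\mathbb{R}^{h}$, and let $\epsilon>0$. For each $e\in\mathcal{E}$ let $\mathcal{R}_{e}:\mathbb{R}^{h}\to\mathbb{R}$ be a function (the risk on domain $e$) satisfying the quadratic bowl assumption: for all $\theta\in\mathbb{R}^h$, $$\mathcal{R}_{e}(\theta)=\mathcal{R}_{e}(\theta^{*})+\tfrac12(\theta-\theta^{*})^{\top}H_{e}(\theta-\theta^{*}),$$ where $H_{e}$ is a symmetric positive definite $h\times h$ matrix with eigenvalues $\lambda_{1}^{e}\ge\cdots\ge\lambda_{h}^{e}>0$. For $A\in\mathcal{E}$, let $N_{A,\theta^{*}}^{\epsilon}$ denote the largest path-connected subset of $\mathbb{R}^h$ containing $\theta^*$ on which $|\mathcal{R}_{A}(\theta)-\mathcal{R}_{A}(\theta^{*})|\le\epsilon$ (i.e. the path-connected component of $\theta^*$ in $\{\theta : |\mathcal{R}_{A}(\theta)-\mathcal{R}_{A}(\theta^{*})|\le\epsilon\}$). For $(A,B)\in\mathcal{E}^2$ define $$\mathcal{I}^{\epsilon}(A,B)=\max_{\theta\in N_{A,\theta^{*}}^{\epsilon}}\left|\mathcal{R}_{B}(\theta)-\mathcal{R}_{A}(\theta^{*})\right|,\qquad R(A,B)=\mathcal{R}_{B}(\theta^{*})-\mathcal{R}_{A}(\theta^{*}),$$ $$H^{\epsilon}(A,B)=\max_{\theta:\ \frac12(\theta-\theta^{*})^{\top}H_{A}(\theta-\theta^{*})\le\epsilon}\ \tfrac12(\theta-\theta^{*})^{\top}H_{B}(\theta-\theta^{*}).$$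 Suppose that for all $(A,B)\in\mathcal{E}^2$ with $R(A,B)<0$ we have $$\epsilon\le -R(A,B)\times\frac{\lambda_{h}^{A}}{\lambda_{1}^{B}}.$$ Then $$\max_{(A,B)\in\mathcal{E}^2}\mathcal{I}^{\epsilon}(A,B)=\max_{(A,B)\in\mathcal{E}^2}\bigl(R(A,B)+H^{\epsilon}(A,B)\bigr).$$
   Context: $\mathcal{I}^{\epsilon}(A,B)$ is called the inconsistency between domains $A$ and $B$ around $\theta^*$; $\lambda_1^{B}$ denotes the largest eigenvalue of $H_B$ and $\lambda_h^{A}$ the smallest eigenvalue of $H_A$. *)

theory Defs
  imports "HOL-Analysis.Analysis"
begin

definition sym_matrix :: "real^'n^'n \<Rightarrow> bool" where
  "sym_matrix H \<longleftrightarrow> transpose H = H"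

definition pos_def_matrix :: "real^'n^'n \<Rightarrow> bool" where
  "pos_def_matrix H \<longleftrightarrow> (\<forall>v. v \<noteq> 0 \<longrightarrow> v \<bullet> (H *v v) > 0)"

definition eigenvalues :: "real^'n^'n \<Rightarrow> real set" where
  "eigenvalues H = {l. \<exists>v. v \<noteq> 0 \<and> H *v v = l *\<^sub>R v}"

definition lambda_max :: "real^'n^'n \<Rightarrow> real" where
  "lambda_max H = Max (eigenvalues H)"

definition lambda_min :: "real^'n^'n \<Rightarrow> real" where
  "lambda_min H = Min (eigenvalues H)"

definition qform :: "real^'n^'n \<Rightarrow> real^'n \<Rightarrow> real" where
  "qform H d = (1/2) * (d \<bullet> (H *v d))"

definition nbhd :: "(real^'n \<Rightarrow> real) \<Rightarrow> real^'n \<Rightarrow> real \<Rightarrow> (real^'n) set" where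
  "nbhd RA th eps = path_component_set {t. \<bar>RA t - RA th\<bar> \<le> eps} th"

definition inconsistency ::
  "('e \<Rightarrow> real^'n \<Rightarrow> real) \<Rightarrow> real^'n \<Rightarrow> real \<Rightarrow> 'e \<Rightarrow> 'e \<Rightarrow> real" where
  "inconsistency R th eps A B =
     (SUP t \<in> nbhd (R A) th eps. \<bar>R B t - R A th\<bar>)"

definition Rdiff :: "('e \<Rightarrow> real^'n \<Rightarrow> real) \<Rightarrow> real^'n \<Rightarrow> 'e \<Rightarrow> 'e \<Rightarrow> real" where
  "Rdiff R th A B = R B th - R A th"

definition Heps ::
  "('e \<Rightarrow> real^'n^'n) \<Rightarrow> real^'n \<Rightarrow> real \<Rightarrow> 'e \<Rightarrow> 'e \<Rightarrow> real" where
  "Heps H th eps A B =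
     (SUP t \<in> {t. qform (H A) (t - th) \<le> eps}. qform (H B) (t - th))"

end

theory Submission
  imports Defs
begin

text \<open>
  Under the quadratic bowl assumption the \<open>\<epsilon>\<close>-neighbourhood of \<open>\<theta>*\<close> for domain \<open>A\<close> is the whole
  ellipsoid \<open>{\<theta>. q\<^sub>A(\<theta> - \<theta>*) \<le> \<epsilon>}\<close>, where \<open>q\<^sub>e(d) = d\<^sup>TH\<^sub>ed/2\<close>: it is star-shaped about \<open>\<theta>*\<close>, hence path
  connected, and it is compact. On it \<open>R\<^sub>B(\<theta>) - R\<^sub>A(\<theta>*) = R(A,B) + q\<^sub>B(\<theta> - \<theta>*)\<close> with
  \<open>0 \<le> q\<^sub>B \<le> H\<^sup>\<epsilon>(A,B)\<close>, so
  \<open>R(A,B) + H\<^sup>\<epsilon>(A,B) \<le> I\<^sup>\<epsilon>(A,B) \<le> max (-R(A,B)) (R(A,B) + H\<^sup>\<epsilon>(A,B))\<close>.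
  The only excess term is \<open>-R(A,B) = R(B,A) \<le> R(B,A) + H\<^sup>\<epsilon>(B,A)\<close>, which the swapped pair already
  attains; hence the two maxima over \<open>E \<times> E\<close> coincide.
\<close>

lemma qform_scaleR: "qform H (c *\<^sub>R d) = c\<^sup>2 * qform H d"
  by (simp add: qform_def matrix_vector_mult_scaleR power2_eq_square)

lemma qform_nonneg: "pos_def_matrix H \<Longrightarrow> 0 \<le> qform H d"
  unfolding pos_def_matrix_def qform_def
  by (cases "d = 0") (auto intro: less_imp_le)

lemma continuous_on_qform: "continuous_on S (qform H)"
  unfolding qform_def by (intro continuous_intros)

text \<open>The minimum of the form on the unit sphere is a coercivity constant.\<close>
lemma pos_def_matrix_coercive:
  assumes "pos_def_matrix (H :: real^'n^'n)"
  obtains k where "k > 0" and "\<And>d. k * (norm d)\<^sup>2 \<le> qform H d"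
proof -
  obtain u :: "real^'n" where "norm u = 1"
    using vector_choose_size[of 1] by auto
  then have "sphere (0 :: real^'n) 1 \<noteq> {}" by auto
  then obtain x where x: "x \<in> sphere 0 1" and x_min: "\<And>y. y \<in> sphere 0 1 \<Longrightarrow> qform H x \<le> qform H y"
    using continuous_attains_inf[OF compact_sphere _ continuous_on_qform] by blast
  have "x \<noteq> 0" using x by auto
  then have pos: "qform H x > 0"
    using assms by (simp add: pos_def_matrix_def qform_def)
  have "qform H x * (norm d)\<^sup>2 \<le> qform H d" for d
  proof (cases "d = 0")
    case False
    have "qform H x \<le> qform H ((1 / norm d) *\<^sub>R d)"
      using False by (intro x_min) simp
    also have "\<dots> = qform H d / (norm d)\<^sup>2"
      by (simp add: qform_scaleR power_divide)
    finally show ?thesis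
      using False by (simp add: field_simps)
  qed (simp add: qform_def)
  with pos show thesis by (rule that)
qed

lemma compact_qform_sublevel:
  assumes "pos_def_matrix H"
  shows "compact {t. qform H (t - c) \<le> eps}"
  unfolding compact_eq_bounded_closed
proof
  obtain k where k: "k > 0" "\<And>d. k * (norm d)\<^sup>2 \<le> qform H d"
    using pos_def_matrix_coercive[OF assms] by blast
  have "{t. qform H (t - c) \<le> eps} \<subseteq> cball c (sqrt (eps / k))"
  proof
    fix t assume "t \<in> {t. qform H (t - c) \<le> eps}"
    then have "(norm (t - c))\<^sup>2 \<le> eps / k"
      using k order_trans[OF k(2)[of "t - c"]] by (simp add: field_simps)
    then show "t \<in> cball c (sqrt (eps / k))"
      by (simp add: dist_norm norm_minus_commute real_le_rsqrt)
  qed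
  then show "bounded {t. qform H (t - c) \<le> eps}"
    using bounded_cball bounded_subset by blast
  show "closed {t. qform H (t - c) \<le> eps}"
    by (intro closed_Collect_le continuous_on_compose2[OF continuous_on_qform] continuous_intros) auto
qed

lemma closed_segment_subset_qform_sublevel:
  assumes "pos_def_matrix H" and "qform H (t - c) \<le> eps"
  shows "closed_segment c t \<subseteq> {t. qform H (t - c) \<le> eps}"
proof
  fix y assume "y \<in> closed_segment c t"
  then obtain u where u: "0 \<le> u" "u \<le> 1" and y: "y - c = u *\<^sub>R (t - c)"
    unfolding closed_segment_def by (auto simp: algebra_simps)
  have "qform H (y - c) = u\<^sup>2 * qform H (t - c)"
    by (simp add: y qform_scaleR)
  also have "\<dots> \<le> qform H (t - c)"
    using u qform_nonneg[OF assms(1)] by (intro mult_left_le_one_le) (auto simp: power_le_one)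
  finally show "y \<in> {t. qform H (t - c) \<le> eps}"
    using assms(2) by simp
qed

lemma nbhd_quadratic_bowl:
  assumes bowl: "\<And>t. RA t = RA th + qform HA (t - th)" and "pos_def_matrix HA"
  shows "nbhd RA th eps = {t. qform HA (t - th) \<le> eps}"
proof -
  let ?S = "{t. qform HA (t - th) \<le> eps}"
  have "\<bar>RA t - RA th\<bar> = qform HA (t - th)" for t
    using bowl[of t] qform_nonneg[OF assms(2), of "t - th"] by linarith
  then have sublevel_eq: "{t. \<bar>RA t - RA th\<bar> \<le> eps} = ?S"
    by simp
  show ?thesis
    unfolding nbhd_def sublevel_eq
  proof (rule subset_antisym)
    show "path_component_set ?S th \<subseteq> ?S"
      by (rule path_component_subset)
    show "?S \<subseteq> path_component_set ?S th"
      by (auto intro!: path_component_linepath closed_segment_subset_qform_sublevel[OF assms(2)])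
  qed
qed

lemma SUP_abs_add_bounds:
  fixes f :: "'a \<Rightarrow> real"
  assumes "S \<noteq> {}" and bdd: "bdd_above (f ` S)" and nonneg: "\<And>t. t \<in> S \<Longrightarrow> 0 \<le> f t"
  shows "r + (SUP t\<in>S. f t) \<le> (SUP t\<in>S. \<bar>r + f t\<bar>)"
    and "(SUP t\<in>S. \<bar>r + f t\<bar>) \<le> max (- r) (r + (SUP t\<in>S. f t))"
proof -
  have f_le: "f t \<le> (SUP t\<in>S. f t)" if "t \<in> S" for t
    using that bdd by (rule cSUP_upper)
  have abs_le: "\<bar>r + f t\<bar> \<le> max (- r) (r + (SUP t\<in>S. f t))" if "t \<in> S" for t
  proof (cases "0 \<le> r + f t")
    case True
    then show ?thesis using f_le[OF that] by (simp add: le_max_iff_disj)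
  next
    case False
    then show ?thesis using nonneg[OF that] by (simp add: le_max_iff_disj)
  qed
  have bdd_abs: "bdd_above ((\<lambda>t. \<bar>r + f t\<bar>) ` S)"
    using abs_le by (rule bdd_aboveI2)
  have "f t \<le> (SUP t\<in>S. \<bar>r + f t\<bar>) - r" if "t \<in> S" for t
  proof -
    have "r + f t \<le> (SUP t\<in>S. \<bar>r + f t\<bar>)"
      using cSUP_upper[OF that bdd_abs] by (simp add: abs_le_iff)
    then show ?thesis by simp
  qed
  then have "(SUP t\<in>S. f t) \<le> (SUP t\<in>S. \<bar>r + f t\<bar>) - r"
    by (rule cSUP_least[OF \<open>S \<noteq> {}\<close>])
  then show "r + (SUP t\<in>S. f t) \<le> (SUP t\<in>S. \<bar>r + f t\<bar>)"
    by simp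
  show "(SUP t\<in>S. \<bar>r + f t\<bar>) \<le> max (- r) (r + (SUP t\<in>S. f t))"
    by (rule cSUP_least[OF \<open>S \<noteq> {}\<close> abs_le])
qed

lemma bdd_above_qform_on_sublevel:
  assumes "pos_def_matrix HA"
  shows "bdd_above ((\<lambda>t. qform HB (t - c)) ` {t. qform HA (t - c) \<le> eps})"
proof -
  have "continuous_on {t. qform HA (t - c) \<le> eps} (\<lambda>t. qform HB (t - c))"
    by (intro continuous_on_compose2[OF continuous_on_qform] continuous_intros) auto
  then show ?thesis
    using compact_qform_sublevel[OF assms]
    by (intro bounded_imp_bdd_above compact_imp_bounded compact_continuous_image)
qed

lemma Heps_nonneg:
  assumes "pos_def_matrix (H A)" and "0 \<le> eps"
  shows "0 \<le> Heps H th eps A B"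
proof -
  have "qform (H B) (th - th) \<le> Heps H th eps A B"
    unfolding Heps_def using \<open>0 \<le> eps\<close>
    by (intro cSUP_upper bdd_above_qform_on_sublevel[OF assms(1)]) (simp add: qform_def)
  then show ?thesis
    by (simp add: qform_def)
qed

lemma inconsistency_quadratic_bowl:
  assumes bowl_A: "\<And>t. R A t = R A th + qform (H A) (t - th)"
    and bowl_B: "\<And>t. R B t = R B th + qform (H B) (t - th)"
    and "pos_def_matrix (H A)"
  shows "inconsistency R th eps A B
       = (SUP t\<in>{t. qform (H A) (t - th) \<le> eps}. \<bar>Rdiff R th A B + qform (H B) (t - th)\<bar>)"
proof -
  have "R B t - R A th = Rdiff R th A B + qform (H B) (t - th)" for t
    using bowl_B[of t] by (simp add: Rdiff_def)
  then show ?thesis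
    unfolding inconsistency_def nbhd_quadratic_bowl[OF bowl_A assms(3)] by (simp only:)
qed

lemma inconsistency_bounds:
  assumes bowl_A: "\<And>t. R A t = R A th + qform (H A) (t - th)"
    and bowl_B: "\<And>t. R B t = R B th + qform (H B) (t - th)"
    and pd_A: "pos_def_matrix (H A)" and pd_B: "pos_def_matrix (H B)"
    and "0 \<le> eps"
  shows "Rdiff R th A B + Heps H th eps A B \<le> inconsistency R th eps A B"
    and "inconsistency R th eps A B \<le> max (- Rdiff R th A B) (Rdiff R th A B + Heps H th eps A B)"
proof -
  let ?S = "{t. qform (H A) (t - th) \<le> eps}"
  have "th \<in> ?S"
    using \<open>0 \<le> eps\<close> by (simp add: qform_def)
  then have "?S \<noteq> {}" by blast
  note bounds = SUP_abs_add_bounds[OF this bdd_above_qform_on_sublevel[OF pd_A] qform_nonneg[OF pd_B],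
      of "Rdiff R th A B"]
  show "Rdiff R th A B + Heps H th eps A B \<le> inconsistency R th eps A B"
    and "inconsistency R th eps A B \<le> max (- Rdiff R th A B) (Rdiff R th A B + Heps H th eps A B)"
    using bounds unfolding inconsistency_quadratic_bowl[OF bowl_A bowl_B pd_A] Heps_def by simp_all
qed

lemma Max_pairs_eq_if_swap_dominates:
  fixes f g :: "'e \<Rightarrow> 'e \<Rightarrow> 'a :: linorder"
  assumes "finite E" and "E \<noteq> {}"
    and lower: "\<And>A B. A \<in> E \<Longrightarrow> B \<in> E \<Longrightarrow> g A B \<le> f A B"
    and upper: "\<And>A B. A \<in> E \<Longrightarrow> B \<in> E \<Longrightarrow> f A B \<le> max (g B A) (g A B)"
  shows "Max ((\<lambda>(A, B). f A B) ` (E \<times> E)) = Max ((\<lambda>(A, B). g A B) ` (E \<times> E))"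
proof -
  let ?F = "(\<lambda>(A, B). f A B) ` (E \<times> E)" and ?G = "(\<lambda>(A, B). g A B) ` (E \<times> E)"
  have fin: "finite ?F" "finite ?G" and ne: "?F \<noteq> {}" "?G \<noteq> {}"
    using assms(1,2) by auto
  have g_le: "g A B \<le> Max ?G" if "A \<in> E" "B \<in> E" for A B
    using fin(2) that by (intro Max_ge) force+
  have f_le: "f A B \<le> Max ?F" if "A \<in> E" "B \<in> E" for A B
    using fin(1) that by (intro Max_ge) force+
  show ?thesis
  proof (rule antisym)
    have "f A B \<le> Max ?G" if "A \<in> E" "B \<in> E" for A B
      using that by (intro order_trans[OF upper[OF that]]) (simp add: g_le)
    then show "Max ?F \<le> Max ?G"
      using fin(1) ne(1) by (auto simp: Max_le_iff)
    have "g A B \<le> Max ?F" if "A \<in> E" "B \<in> E" for A B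
      using lower[OF that] f_le[OF that] by (rule order_trans)
    then show "Max ?G \<le> Max ?F"
      using fin(2) ne(2) by (auto simp: Max_le_iff)
  qed
qed

theorem mainTheorem1:
  fixes E :: "'e set"
    and R :: "'e \<Rightarrow> real^'n \<Rightarrow> real"
    and H :: "'e \<Rightarrow> real^'n^'n"
    and th :: "real^'n"
    and eps :: real
  assumes "finite E" and "E \<noteq> {}"
    and "eps > 0"
    and "\<And>e. e \<in> E \<Longrightarrow> sym_matrix (H e)"
    and "\<And>e. e \<in> E \<Longrightarrow> pos_def_matrix (H e)"
    and "\<And>e t. e \<in> E \<Longrightarrow> R e t = R e th + qform (H e) (t - th)"
    and "\<And>A B. A \<in> E \<Longrightarrow> B \<in> E \<Longrightarrow> Rdiff R th A B < 0 \<Longrightarrow>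
           eps \<le> - Rdiff R th A B * (lambda_min (H A) / lambda_max (H B))"
  shows "Max ((\<lambda>(A, B). inconsistency R th eps A B) ` (E \<times> E))
       = Max ((\<lambda>(A, B). Rdiff R th A B + Heps H th eps A B) ` (E \<times> E))"
proof (rule Max_pairs_eq_if_swap_dominates[OF assms(1,2)])
  fix A B assume AB: "A \<in> E" "B \<in> E"
  note bounds = inconsistency_bounds[OF assms(6)[OF AB(1)] assms(6)[OF AB(2)]
      assms(5)[OF AB(1)] assms(5)[OF AB(2)] less_imp_le[OF assms(3)]]
  show "Rdiff R th A B + Heps H th eps A B \<le> inconsistency R th eps A B"
    by (rule bounds(1))
  have "- Rdiff R th A B \<le> Rdiff R th B A + Heps H th eps B A"
    using Heps_nonneg[of H B eps th A, OF assms(5)[OF AB(2)] less_imp_le[OF assms(3)]]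
    by (simp add: Rdiff_def)
  then show "inconsistency R th eps A B
      \<le> max (Rdiff R th B A + Heps H th eps B A) (Rdiff R th A B + Heps H th eps A B)"
    using bounds(2) by linarith
qed

end
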